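(* In the setting described in the context, let $\hat u_0=\min\{x\in[v,z_0]: f^2(x)=d\}$, for $n\ge1$ let $\hat\mu'_{m,n}=\max\{x\in[v,\hat u_0]: f^{m+2n}(x)=d\}$, and for $n,k\ge1$ let $\hat\mu_{m,n,k}=\min\{x\in[\hat\mu'_{m,n},\hat\mu'_{m,n+1}]: f^{m+2n+2k}(x)=d\}$ (these sets are nonempty). Then for each $n\ge1$ and $k\ge1$, every periodic point of $f$ in $[\hat\mu'_{m,n},\hat\mu_{m,n,k}]$ whose least period is odd has least period $\ge m+2n+2k$.
   Context: Let $I$ be a compact interval and $f:I\to I$ continuous; $f^1=f$, $f^n=f\circ f^{n-1}$. A point $x_0$ is a periodic point of least period $k$ (a period-$k$ point) if $f^k(x_0)=x_0$ and $f^i(x_0)\ne x_0$ for $0<i<k$. Let $m\ge3$ be odd and let $P$ be a periodic orbit of $f$ of least period $m$. Put $e=f^{m-1}(\min P)$. Let $v\in[\min P,e)$ be a point with $f(v)=e$, and let $z\in(v,e)$ be a fixed point of $f$ (such points exist). Define $z_0=\min\{x\in[v,z]: f^2(x)=x\}$ and $d=\max\{x\in[\min P,v]: f^2(x)=z_0\}$ (both sets are nonempty). *)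

theory Defs
  imports "HOL-Analysis.Analysis"
begin

definition least_period_point :: "(real \<Rightarrow> real) \<Rightarrow> nat \<Rightarrow> real \<Rightarrow> bool" where
  "least_period_point f k x \<longleftrightarrow>
     0 < k \<and> (f ^^ k) x = x \<and> (\<forall>i. 0 < i \<and> i < k \<longrightarrow> (f ^^ i) x \<noteq> x)"

end

theory Submission
  imports Defs
begin

text \<open>
  The map f^2 sends u0 to d and d to z0, a fixed point of f^2, while f stays above z0 at u0,
  d and z0. Hence all odd iterates of u0 lie above z0 and f^(2r) maps [d, z0] onto itself, so
  whenever an odd iterate f^q runs across [d, z0] along an interval, every f^(q + 2r) takes the
  value d there; the points mu' n and mu n k are extreme solutions of such equations.
  A point y of [mu' n, mu n k] with odd period p < m + 2n + 2k has f^(p + 2) y = f^2 y < d.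
  If p + 2 \<le> m + 2n, then f^(p + 2) runs across [d, z0] along [y, u0], contradicting the
  maximality of mu' n; otherwise it does so along [mu' n, y], contradicting the minimality of
  mu n k. At the endpoints, y reaches d, which forces z0 to be a fixed point of f and y = z0.
\<close>

lemma funpow_2_apply: "(f ^^ 2) x = f (f x)"
  by (simp add: numeral_2_eq_2)

lemma funpow_add_apply: "(f ^^ (i + j)) x = (f ^^ i) ((f ^^ j) x)"
  by (simp add: funpow_add)

lemma funpow_swap: "(f ^^ i) ((f ^^ j) x) = (f ^^ j) ((f ^^ i) x)"
  by (metis funpow_add_apply add.commute)

lemma funpow_even_of_period2:
  assumes "(f ^^ 2) w = w" "even p"
  shows "(f ^^ p) w = w"
  using funpow_mod_eq[OF assms(1), of p] assms(2) by (simp add: even_iff_mod_2_eq_zero)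

lemma funpow_odd_of_period2:
  assumes "(f ^^ 2) w = w" "odd p"
  shows "(f ^^ p) w = f w"
  using funpow_mod_eq[OF assms(1), of p] assms(2) by (simp add: odd_iff_mod_2_eq_one)

lemma fixed_point_of_period2_odd_period:
  assumes "(f ^^ 2) w = w" "(f ^^ p) w = w" "odd p"
  shows "f w = w"
  using funpow_odd_of_period2[OF assms(1,3)] assms(2) by simp

lemma periodic_point_eq_fixed_iterate:
  assumes "(f ^^ p) y = y" "0 < p" "(f ^^ j) y = w" "f w = w"
  shows "y = w"
proof -
  have w_fixed: "(f ^^ i) w = w" for i
    by (induction i) (simp_all add: assms(4))
  have "y = (f ^^ (p * j)) y"
    using funpow_mod_eq[OF assms(1), of "p * j"] by simp
  also have "\<dots> = (f ^^ (p * j - j)) ((f ^^ j) y)"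
    using assms(2) by (simp flip: funpow_add_apply)
  finally show ?thesis
    using assms(3) w_fixed by simp
qed

lemma period2_of_iterate_period2:
  assumes "(f ^^ p) x = x" "0 < p" "(f ^^ 2) ((f ^^ i) x) = (f ^^ i) x"
  shows "(f ^^ 2) x = x"
proof -
  have x_eq: "(f ^^ (p * i - i)) ((f ^^ i) x) = x"
    using funpow_mod_eq[OF assms(1), of "p * i"] assms(2)
    by (simp flip: funpow_add_apply)
  have "(f ^^ 2) ((f ^^ (p * i - i)) ((f ^^ i) x)) = (f ^^ (p * i - i)) ((f ^^ i) x)"
    by (simp only: funpow_swap[of 2 f "p * i - i"] assms(3))
  then show ?thesis
    by (simp only: x_eq)
qed

lemma level_set_Inf_mem:
  fixes h :: "real \<Rightarrow> real"
  assumes "continuous_on {s..t} h" "x \<in> {s..t}" "h x = c"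
  shows "Inf {x \<in> {s..t}. h x = c} \<in> {x \<in> {s..t}. h x = c}"
proof (rule closed_contains_Inf)
  show "closed {x \<in> {s..t}. h x = c}"
    by (rule continuous_closed_preimage_constant[OF assms(1)]) simp
qed (use assms in \<open>auto intro: bdd_belowI\<close>)

lemma level_set_Sup_mem:
  fixes h :: "real \<Rightarrow> real"
  assumes "continuous_on {s..t} h" "x \<in> {s..t}" "h x = c"
  shows "Sup {x \<in> {s..t}. h x = c} \<in> {x \<in> {s..t}. h x = c}"
proof (rule closed_contains_Sup)
  show "closed {x \<in> {s..t}. h x = c}"
    by (rule continuous_closed_preimage_constant[OF assms(1)]) simp
qed (use assms in \<open>auto intro: bdd_aboveI\<close>)

lemma level_set_Inf_le:
  fixes h :: "real \<Rightarrow> real"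
  assumes "y \<in> {s..t}" "h y = c"
  shows "Inf {x \<in> {s..t}. h x = c} \<le> y"
  using assms by (intro cInf_lower) (auto intro: bdd_belowI)

lemma level_set_Sup_ge:
  fixes h :: "real \<Rightarrow> real"
  assumes "y \<in> {s..t}" "h y = c"
  shows "y \<le> Sup {x \<in> {s..t}. h x = c}"
  using assms by (intro cSup_upper) (auto intro: bdd_aboveI)

locale interval_self_map =
  fixes a b :: real and f :: "real \<Rightarrow> real"
  assumes continuous: "continuous_on {a..b} f"
    and maps_into: "f ` {a..b} \<subseteq> {a..b}"
begin

lemma iterate_in: "x \<in> {a..b} \<Longrightarrow> (f ^^ n) x \<in> {a..b}"
  by (induction n) (use maps_into in \<open>auto simp: image_subset_iff\<close>)

lemma iterate_continuous: "continuous_on {a..b} (f ^^ n)"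
proof (induction n)
  case (Suc n)
  have "continuous_on {a..b} (f \<circ> (f ^^ n))"
    using Suc iterate_in
    by (intro continuous_on_compose continuous_on_subset[OF continuous]) auto
  then show ?case by simp
qed (simp add: continuous_on_id)

lemma iterate_continuous_on: "a \<le> s \<Longrightarrow> t \<le> b \<Longrightarrow> continuous_on {s..t} (f ^^ n)"
  by (rule continuous_on_subset[OF iterate_continuous]) auto

lemma iterate_IVT:
  assumes "a \<le> s" "s \<le> t" "t \<le> b"
    and "(f ^^ n) s \<le> c \<and> c \<le> (f ^^ n) t \<or> (f ^^ n) t \<le> c \<and> c \<le> (f ^^ n) s"
  obtains x where "s \<le> x" "x \<le> t" "(f ^^ n) x = c"
  using assms iterate_continuous_on[OF assms(1,3)] IVT'[of "f ^^ n" s c t] IVT2'[of "f ^^ n" t c s]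
  by blast

lemma iterate_fixed_point_IVT:
  assumes "a \<le> s" "s \<le> t" "t \<le> b"
    and "(f ^^ n) s \<le> s \<and> t \<le> (f ^^ n) t \<or> s \<le> (f ^^ n) s \<and> (f ^^ n) t \<le> t"
  obtains x where "s \<le> x" "x \<le> t" "(f ^^ n) x = x"
proof -
  have "continuous_on {s..t} (\<lambda>x. (f ^^ n) x - x)"
    by (intro continuous_on_diff iterate_continuous_on continuous_on_id) (use assms in auto)
  moreover have "(f ^^ n) s - s \<le> 0 \<and> 0 \<le> (f ^^ n) t - t \<or> (f ^^ n) t - t \<le> 0 \<and> 0 \<le> (f ^^ n) s - s"
    using assms(4) by linarith
  ultimately obtain x where "s \<le> x" "x \<le> t" "(f ^^ n) x - x = 0"
    using IVT'[of "\<lambda>x. (f ^^ n) x - x" s 0 t] IVT2'[of "\<lambda>x. (f ^^ n) x - x" t 0 s] assms(2)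
    by blast
  then show ?thesis
    using that by simp
qed

end

locale odd_periodic_orbit = interval_self_map +
  fixes m :: nat and x0 :: real
  assumes odd_period: "odd m" and period_ge_3: "3 \<le> m"
    and x0_in: "x0 \<in> {a..b}"
    and x0_least_period: "least_period_point f m x0"
begin

definition orbit :: "real set" where
  "orbit = {(f ^^ i) x0 | i. i < m}"

definition orbit_min :: real where
  "orbit_min = Min orbit"

definition e :: real where
  "e = (f ^^ (m - 1)) orbit_min"

lemma x0_periodic: "(f ^^ m) x0 = x0"
  using x0_least_period by (simp add: least_period_point_def)

lemma iterate_x0_in_orbit: "(f ^^ n) x0 \<in> orbit"
proof -
  have "(f ^^ n) x0 = (f ^^ (n mod m)) x0"
    using funpow_mod_eq[OF x0_periodic] by simp
  moreover have "n mod m < m"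
    using period_ge_3 by simp
  ultimately show ?thesis
    unfolding orbit_def by blast
qed

lemma orbit_iterate_in: "q \<in> orbit \<Longrightarrow> (f ^^ n) q \<in> orbit"
  using iterate_x0_in_orbit by (auto simp: orbit_def simp flip: funpow_add_apply)

lemma orbit_periodic: "q \<in> orbit \<Longrightarrow> (f ^^ m) q = q"
  using x0_periodic funpow_swap[of m f] by (auto simp: orbit_def)

lemma orbit_subset: "orbit \<subseteq> {a..b}"
  using iterate_in x0_in by (auto simp: orbit_def)

lemma orbit_no_period2_point: "q \<in> orbit \<Longrightarrow> (f ^^ 2) q \<noteq> q"
proof
  assume "q \<in> orbit" "(f ^^ 2) q = q"
  then obtain i where i: "(f ^^ 2) ((f ^^ i) x0) = (f ^^ i) x0"
    by (auto simp: orbit_def)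
  have "(f ^^ 2) x0 = x0"
    using period2_of_iterate_period2[OF x0_periodic _ i] period_ge_3 by simp
  then have "f x0 = x0"
    by (rule fixed_point_of_period2_odd_period[OF _ x0_periodic odd_period])
  moreover have "(f ^^ 1) x0 \<noteq> x0"
    using x0_least_period period_ge_3 unfolding least_period_point_def
    by (auto dest: spec[of _ 1])
  ultimately show False
    by simp
qed

lemma orbit_min_in: "orbit_min \<in> orbit"
  and orbit_min_le: "q \<in> orbit \<Longrightarrow> orbit_min \<le> q"
proof -
  have "orbit = (\<lambda>i. (f ^^ i) x0) ` {..<m}"
    unfolding orbit_def by auto
  then have "finite orbit"
    by simp
  moreover have "orbit \<noteq> {}"
    using iterate_x0_in_orbit by blast
  ultimately show "orbit_min \<in> orbit" "q \<in> orbit \<Longrightarrow> orbit_min \<le> q"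
    unfolding orbit_min_def by auto
qed

lemma e_in_orbit: "e \<in> orbit"
  unfolding e_def by (rule orbit_iterate_in[OF orbit_min_in])

lemma a_le_orbit_min: "a \<le> orbit_min"
  using orbit_subset orbit_min_in by auto

lemma e_le_b: "e \<le> b"
  using orbit_subset e_in_orbit by auto

lemma f_e: "f e = orbit_min"
proof -
  have "f e = (f ^^ Suc (m - 1)) orbit_min"
    by (simp add: e_def)
  also have "\<dots> = orbit_min"
    using period_ge_3 orbit_periodic[OF orbit_min_in] by simp
  finally show ?thesis .
qed

end

locale odd_orbit_setting = odd_periodic_orbit +
  fixes v z :: real
  assumes v_in: "v \<in> {orbit_min..<e}" and f_v: "f v = e"
    and z_in: "z \<in> {v<..<e}" and f_z: "f z = z"
begin

definition z0 :: real where
  "z0 = Inf {x \<in> {v..z}. (f ^^ 2) x = x}"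

definition d :: real where
  "d = Sup {x \<in> {orbit_min..v}. (f ^^ 2) x = z0}"

definition u0 :: real where
  "u0 = Inf {x \<in> {v..z0}. (f ^^ 2) x = d}"

definition mu' :: "nat \<Rightarrow> real" where
  "mu' n = Sup {x \<in> {v..u0}. (f ^^ (m + 2*n)) x = d}"

definition mu :: "nat \<Rightarrow> nat \<Rightarrow> real" where
  "mu n k = Inf {x \<in> {mu' n..mu' (n+1)}. (f ^^ (m + 2*n + 2*k)) x = d}"

lemma iterate_IVT_between_orbit_min_e:
  assumes "orbit_min \<le> s" "s \<le> t" "t \<le> e"
    and "(f ^^ n) s \<le> c \<and> c \<le> (f ^^ n) t \<or> (f ^^ n) t \<le> c \<and> c \<le> (f ^^ n) s"
  obtains x where "s \<le> x" "x \<le> t" "(f ^^ n) x = c"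
proof -
  have "a \<le> s" "t \<le> b"
    using assms(1,3) a_le_orbit_min e_le_b by linarith+
  then show ?thesis
    using iterate_IVT[of s t n c] assms(2,4) that by blast
qed

lemma iterate_continuous_on_between_orbit_min_e:
  "orbit_min \<le> s \<Longrightarrow> t \<le> e \<Longrightarrow> continuous_on {s..t} (f ^^ n)"
  using a_le_orbit_min e_le_b by (intro iterate_continuous_on) linarith+

lemma iter2_v: "(f ^^ 2) v = orbit_min"
  using f_v f_e by (simp add: funpow_2_apply)

lemma orbit_min_less_v: "orbit_min < v"
proof -
  have "v \<noteq> orbit_min"
    using iter2_v orbit_no_period2_point[OF orbit_min_in] by auto
  then show ?thesis
    using v_in by simp
qed

lemma z0_mem: "v \<le> z0" "z0 \<le> z" "(f ^^ 2) z0 = z0"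
proof -
  have fixed_set: "{x \<in> {v..z}. (f ^^ 2) x = x} = {x \<in> {v..z}. (f ^^ 2) x - x = 0}"
    by auto
  have "continuous_on {v..z} (\<lambda>x. (f ^^ 2) x - x)"
    using v_in z_in
    by (intro continuous_on_diff iterate_continuous_on_between_orbit_min_e continuous_on_id) auto
  moreover have "(f ^^ 2) z - z = 0"
    using f_z by (simp add: funpow_2_apply)
  ultimately have "z0 \<in> {x \<in> {v..z}. (f ^^ 2) x - x = 0}"
    unfolding z0_def fixed_set using z_in by (intro level_set_Inf_mem) auto
  then show "v \<le> z0" "z0 \<le> z" "(f ^^ 2) z0 = z0"
    by auto
qed

lemma z0_le_fixed: "v \<le> x \<Longrightarrow> x \<le> z \<Longrightarrow> (f ^^ 2) x = x \<Longrightarrow> z0 \<le> x"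
  unfolding z0_def by (rule cInf_lower) (auto intro: bdd_belowI)

lemma v_less_z0: "v < z0"
proof -
  have "v \<noteq> z0"
    using z0_mem(3) iter2_v orbit_min_less_v by auto
  then show ?thesis
    using z0_mem(1) by simp
qed

lemma z0_less_e: "z0 < e"
  using z0_mem z_in by simp

lemma iter2_less_left_of_z0:
  assumes "v \<le> x" "x < z0"
  shows "(f ^^ 2) x < x"
proof (rule ccontr)
  assume "\<not> (f ^^ 2) x < x"
  then obtain t where "v \<le> t" "t \<le> x" "(f ^^ 2) t = t"
    using iterate_fixed_point_IVT[of v x 2] assms iter2_v orbit_min_less_v
      a_le_orbit_min e_le_b z0_less_e by force
  then show False
    using z0_le_fixed[of t] z0_mem assms by simp
qed

lemma z0_le_f_z0: "z0 \<le> f z0"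
proof (rule ccontr)
  assume "\<not> z0 \<le> f z0"
  then obtain t where t: "v \<le> t" "t \<le> z0" "(f ^^ 1) t = t"
    using iterate_fixed_point_IVT[of v z0 1] v_less_z0 f_v v_in
      a_le_orbit_min e_le_b z0_less_e by force
  then have "z0 \<le> t"
    using z0_le_fixed[of t] z0_mem by (simp add: funpow_2_apply)
  then show False
    using t \<open>\<not> z0 \<le> f z0\<close> by simp
qed

lemma exists_iter2_eq_z0_left_of_v: "\<exists>x. orbit_min \<le> x \<and> x \<le> v \<and> (f ^^ 2) x = z0"
  \<comment> \<open>Otherwise all even iterates of orbit_min stay below z0, but e is one of them.\<close>
proof (rule ccontr)
  assume no_root: "\<not> ?thesis"
  have below: "(f ^^ 2) x < z0" if x: "orbit_min \<le> x" "x \<le> v" for x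
  proof (rule ccontr)
    assume neg: "\<not> (f ^^ 2) x < z0"
    obtain t where "x \<le> t" "t \<le> v" "(f ^^ 2) t = z0"
      by (rule iterate_IVT_between_orbit_min_e[of x v 2 z0]) (use neg x iter2_v orbit_min_less_v v_less_z0 v_in in auto)
    then show False
      using no_root x by auto
  qed
  have step: "(f ^^ 2) w < z0" if "w \<in> orbit" "w < z0" for w
  proof (cases "w \<le> v")
    case True
    then show ?thesis using below orbit_min_le that by blast
  next
    case False
    then show ?thesis using iter2_less_left_of_z0[of w] that by simp
  qed
  have even_iterates: "(f ^^ (2*j)) orbit_min < z0" for j
  proof (induction j)
    case 0
    then show ?case using orbit_min_less_v v_less_z0 by simp
  next
    case (Suc j)
    have "(f ^^ (2 * Suc j)) orbit_min = (f ^^ 2) ((f ^^ (2*j)) orbit_min)"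
      by (simp flip: funpow_add_apply)
    then show ?case
      using step[OF orbit_iterate_in[OF orbit_min_in] Suc] by simp
  qed
  have "e = (f ^^ (2 * ((m - 1) div 2))) orbit_min"
    using odd_period by (simp add: e_def)
  then show False
    using even_iterates[of "(m - 1) div 2"] z0_less_e by simp
qed

lemma d_mem: "orbit_min \<le> d" "d \<le> v" "(f ^^ 2) d = z0"
proof -
  obtain x where "orbit_min \<le> x" "x \<le> v" "(f ^^ 2) x = z0"
    using exists_iter2_eq_z0_left_of_v by blast
  then have "d \<in> {x \<in> {orbit_min..v}. (f ^^ 2) x = z0}"
    unfolding d_def using v_in by (intro level_set_Sup_mem iterate_continuous_on_between_orbit_min_e) auto
  then show "orbit_min \<le> d" "d \<le> v" "(f ^^ 2) d = z0"
    by auto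
qed

lemma le_d: "orbit_min \<le> x \<Longrightarrow> x \<le> v \<Longrightarrow> (f ^^ 2) x = z0 \<Longrightarrow> x \<le> d"
  unfolding d_def by (rule level_set_Sup_ge) auto

lemma orbit_min_less_d: "orbit_min < d"
proof -
  have "z0 \<notin> orbit"
    using orbit_no_period2_point z0_mem(3) by blast
  then have "d \<noteq> orbit_min"
    using d_mem(3) orbit_iterate_in[OF orbit_min_in, of 2] by auto
  then show ?thesis
    using d_mem(1) by simp
qed

lemma d_less_v: "d < v"
proof -
  have "d \<noteq> v"
    using d_mem(3) iter2_v orbit_min_less_v v_less_z0 by auto
  then show ?thesis
    using d_mem(2) by simp
qed

lemma iter2_less_z0_right_of_d:
  assumes "d < x" "x \<le> v"
  shows "(f ^^ 2) x < z0"
proof (rule ccontr)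
  assume neg: "\<not> (f ^^ 2) x < z0"
  obtain t where "x \<le> t" "t \<le> v" "(f ^^ 2) t = z0"
    by (rule iterate_IVT_between_orbit_min_e[of x v 2 z0])
      (use neg assms iter2_v orbit_min_less_d orbit_min_less_v v_less_z0 v_in in auto)
  then show False
    using le_d[of t] assms orbit_min_less_d by simp
qed

lemma z0_le_f_d: "z0 \<le> f d"
proof (rule ccontr)
  assume neg: "\<not> z0 \<le> f d"
  obtain t where t: "d \<le> t" "t \<le> v" "(f ^^ 1) t = z0"
    by (rule iterate_IVT_between_orbit_min_e[of d v 1 z0]) (use neg f_v z0_less_e d_less_v orbit_min_less_d v_in in auto)
  then have "t \<noteq> d"
    using \<open>\<not> z0 \<le> f d\<close> by auto
  then have "(f ^^ 2) t < z0"
    using iter2_less_z0_right_of_d t by simp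
  then show False
    using t z0_le_f_z0 by (simp add: funpow_2_apply)
qed

lemma u0_mem: "v \<le> u0" "u0 \<le> z0" "(f ^^ 2) u0 = d"
proof -
  obtain x where "v \<le> x" "x \<le> z0" "(f ^^ 2) x = d"
    by (rule iterate_IVT_between_orbit_min_e[of v z0 2 d])
      (use iter2_v z0_mem orbit_min_less_d d_less_v v_less_z0 v_in z0_less_e in auto)
  then have "u0 \<in> {x \<in> {v..z0}. (f ^^ 2) x = d}"
    unfolding u0_def using v_in z0_less_e by (intro level_set_Inf_mem iterate_continuous_on_between_orbit_min_e) auto
  then show "v \<le> u0" "u0 \<le> z0" "(f ^^ 2) u0 = d"
    by auto
qed

lemma u0_le: "v \<le> x \<Longrightarrow> x \<le> z0 \<Longrightarrow> (f ^^ 2) x = d \<Longrightarrow> u0 \<le> x"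
  unfolding u0_def by (rule level_set_Inf_le) auto

lemma u0_less_z0: "u0 < z0"
proof -
  have "u0 \<noteq> z0"
    using u0_mem(3) z0_mem(3) d_less_v v_less_z0 by auto
  then show ?thesis
    using u0_mem(2) by simp
qed

lemma iter2_less_d_left_of_u0:
  assumes "v \<le> x" "x < u0"
  shows "(f ^^ 2) x < d"
proof (rule ccontr)
  assume neg: "\<not> (f ^^ 2) x < d"
  obtain t where "v \<le> t" "t \<le> x" "(f ^^ 2) t = d"
    by (rule iterate_IVT_between_orbit_min_e[of v x 2 d])
      (use neg assms iter2_v orbit_min_less_d v_in u0_less_z0 z0_less_e in auto)
  then show False
    using u0_le[of t] assms u0_less_z0 by simp
qed

lemma z0_le_f_u0: "z0 \<le> f u0"
proof (rule ccontr)
  assume neg: "\<not> z0 \<le> f u0"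
  obtain t where t: "v \<le> t" "t \<le> u0" "(f ^^ 1) t = z0"
    by (rule iterate_IVT_between_orbit_min_e[of v u0 1 z0]) (use neg f_v z0_less_e u0_mem u0_less_z0 v_in in auto)
  then have "(f ^^ 2) t < t"
    using iter2_less_left_of_z0 u0_less_z0 by simp
  then show False
    using t z0_le_f_z0 u0_less_z0 by (simp add: funpow_2_apply)
qed

lemma z0_le_odd_iterate_u0:
  assumes "odd q"
  shows "z0 \<le> (f ^^ q) u0"
proof -
  have "q = 1 \<or> q = 3 \<or> 5 \<le> q"
    using assms by presburger
  then consider "q = 1" | "q = 3" | "5 \<le> q"
    by blast
  then show ?thesis
  proof cases
    case 1
    then show ?thesis using z0_le_f_u0 by simp
  next
    case 2
    then have "(f ^^ q) u0 = f ((f ^^ 2) u0)"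
      by (simp add: numeral_3_eq_3 numeral_2_eq_2)
    then show ?thesis using z0_le_f_d u0_mem by simp
  next
    case 3
    have "(f ^^ 4) u0 = (f ^^ 2) ((f ^^ 2) u0)"
      by (simp flip: funpow_add_apply)
    then have "(f ^^ 4) u0 = z0"
      using u0_mem d_mem by simp
    moreover have "(f ^^ q) u0 = (f ^^ (q - 4)) ((f ^^ 4) u0)"
      using 3 by (simp flip: funpow_add_apply)
    moreover have "odd (q - 4)"
      using 3 assms by simp
    ultimately show ?thesis
      using funpow_odd_of_period2[OF z0_mem(3)] z0_le_f_z0 by simp
  qed
qed

lemma even_iterate_onto_d_z0:
  assumes "d \<le> c" "c \<le> z0"
  obtains s where "d \<le> s" "s \<le> z0" "(f ^^ (2*r)) s = c"
proof -
  have "\<exists>s. d \<le> s \<and> s \<le> z0 \<and> (f ^^ (2*r)) s = c"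
    using assms
  proof (induction r arbitrary: c)
    case 0
    then show ?case by auto
  next
    case (Suc r)
    then obtain s' where s': "d \<le> s'" "s' \<le> z0" "(f ^^ (2*r)) s' = c"
      by blast
    obtain s where s: "u0 \<le> s" "s \<le> z0" "(f ^^ 2) s = s'"
      by (rule iterate_IVT_between_orbit_min_e[of u0 z0 2 s'])
        (use s' u0_mem z0_mem u0_less_z0 orbit_min_less_v v_in z0_less_e in auto)
    have "(f ^^ (2 * Suc r)) s = (f ^^ (2*r)) ((f ^^ 2) s)"
      by (simp flip: funpow_add_apply)
    then show ?case
      using s s' u0_mem d_less_v by (intro exI[of _ s]) auto
  qed
  then show ?thesis
    using that by blast
qed

lemma iterate_hits_d_of_sweep:
  assumes "orbit_min \<le> t1" "t1 \<le> t2" "t2 \<le> e"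
    and "(f ^^ q) t1 \<le> d \<and> z0 \<le> (f ^^ q) t2 \<or> (f ^^ q) t2 \<le> d \<and> z0 \<le> (f ^^ q) t1"
  obtains t where "t1 \<le> t" "t \<le> t2" "(f ^^ (q + 2*r)) t = d"
proof -
  obtain s where s: "d \<le> s" "s \<le> z0" "(f ^^ (2*r)) s = d"
    by (rule even_iterate_onto_d_z0[of d]) (use d_less_v v_less_z0 in auto)
  obtain t where t: "t1 \<le> t" "t \<le> t2" "(f ^^ q) t = s"
    by (rule iterate_IVT_between_orbit_min_e[of t1 t2 q s]) (use assms s in auto)
  have "(f ^^ (q + 2*r)) t = d"
    using funpow_add_apply[of "2*r" q f t] t(3) s(3) by (simp add: add.commute)
  then show ?thesis
    using that t by blast
qed

lemma mu'_mem:
  assumes "1 \<le> n"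
  shows "v \<le> mu' n" "mu' n \<le> u0" "(f ^^ (m + 2*n)) (mu' n) = d"
proof -
  have at_v: "(f ^^ (m + 2)) v = orbit_min"
    by (simp only: funpow_add_apply iter2_v orbit_periodic[OF orbit_min_in])
  have at_u0: "z0 \<le> (f ^^ (m + 2)) u0"
    using odd_period by (intro z0_le_odd_iterate_u0) simp
  obtain x where x: "v \<le> x" "x \<le> u0" "(f ^^ (m + 2 + 2*(n - 1))) x = d"
    by (rule iterate_hits_d_of_sweep[of v u0 "m + 2" "n - 1"])
      (use at_v at_u0 orbit_min_less_d u0_mem u0_less_z0 z0_less_e v_in in auto)
  have "m + 2 + 2*(n - 1) = m + 2*n"
    using assms by simp
  then have x_hit: "(f ^^ (m + 2*n)) x = d"
    using x(3) by (simp only:)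
  have "mu' n \<in> {x \<in> {v..u0}. (f ^^ (m + 2*n)) x = d}"
    unfolding mu'_def using x(1,2) x_hit
    by (intro level_set_Sup_mem iterate_continuous_on_between_orbit_min_e) (use v_in u0_less_z0 z0_less_e in auto)
  then show "v \<le> mu' n" "mu' n \<le> u0" "(f ^^ (m + 2*n)) (mu' n) = d"
    by auto
qed

lemma le_mu': "v \<le> x \<Longrightarrow> x \<le> u0 \<Longrightarrow> (f ^^ (m + 2*n)) x = d \<Longrightarrow> x \<le> mu' n"
  unfolding mu'_def by (rule level_set_Sup_ge) auto

lemma mu'_le_mu'_Suc:
  assumes "1 \<le> n"
  shows "mu' n \<le> mu' (n + 1)"
proof -
  have at_u0: "z0 \<le> (f ^^ (m + 2*n)) u0"
    using odd_period by (intro z0_le_odd_iterate_u0) simp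
  obtain t where t: "mu' n \<le> t" "t \<le> u0" "(f ^^ (m + 2*n + 2*1)) t = d"
    by (rule iterate_hits_d_of_sweep[of "mu' n" u0 "m + 2*n" 1])
      (use at_u0 mu'_mem[OF assms] orbit_min_less_v u0_less_z0 z0_less_e in auto)
  then have "t \<le> mu' (n + 1)"
    using le_mu'[of t "n + 1"] mu'_mem[OF assms] by simp
  then show ?thesis
    using t by simp
qed

lemma mu_mem:
  assumes "1 \<le> n" "1 \<le> k"
  shows "mu' n \<le> mu n k" "mu n k \<le> mu' (n + 1)" "(f ^^ (m + 2*n + 2*k)) (mu n k) = d"
proof -
  have "(f ^^ (m + 2*n + 2)) (mu' n) = (f ^^ 2) ((f ^^ (m + 2*n)) (mu' n))"
    by (metis add.commute funpow_add_apply)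
  then have at_left: "(f ^^ (m + 2*n + 2)) (mu' n) = z0"
    using mu'_mem(3)[OF assms(1)] d_mem(3) by simp
  have "m + 2*(n + 1) = m + 2*n + 2"
    by simp
  then have at_right: "(f ^^ (m + 2*n + 2)) (mu' (n + 1)) = d"
    using mu'_mem(3)[of "n + 1"] by simp
  obtain x where x: "mu' n \<le> x" "x \<le> mu' (n + 1)" "(f ^^ (m + 2*n + 2 + 2*(k - 1))) x = d"
    by (rule iterate_hits_d_of_sweep[of "mu' n" "mu' (n + 1)" "m + 2*n + 2" "k - 1"])
      (use at_left at_right mu'_le_mu'_Suc[OF assms(1)] mu'_mem[OF assms(1)] mu'_mem[of "n + 1"]
        orbit_min_less_v u0_less_z0 z0_less_e in auto)
  have "m + 2*n + 2 + 2*(k - 1) = m + 2*n + 2*k"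
    using assms(2) by simp
  then have x_hit: "(f ^^ (m + 2*n + 2*k)) x = d"
    using x(3) by (simp only:)
  have "mu n k \<in> {x \<in> {mu' n..mu' (n + 1)}. (f ^^ (m + 2*n + 2*k)) x = d}"
    unfolding mu_def using x(1,2) x_hit
    by (intro level_set_Inf_mem iterate_continuous_on_between_orbit_min_e)
      (use mu'_mem[OF assms(1)] mu'_mem[of "n + 1"] orbit_min_less_v u0_less_z0 z0_less_e in auto)
  then show "mu' n \<le> mu n k" "mu n k \<le> mu' (n + 1)" "(f ^^ (m + 2*n + 2*k)) (mu n k) = d"
    by auto
qed

lemma mu_le:
  "mu' n \<le> x \<Longrightarrow> x \<le> mu' (n + 1) \<Longrightarrow> (f ^^ (m + 2*n + 2*k)) x = d \<Longrightarrow> mu n k \<le> x"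
  unfolding mu_def by (rule level_set_Inf_le) auto

lemma even_iterate_d:
  assumes "1 \<le> i"
  shows "(f ^^ (2*i)) d = z0"
proof -
  obtain j where "i = j + 1"
    using assms by (metis le_add_diff_inverse2)
  then have "(f ^^ (2*i)) d = (f ^^ (2*j + 2)) d"
    by simp
  also have "\<dots> = (f ^^ (2*j)) ((f ^^ 2) d)"
    by (rule funpow_add_apply)
  finally show ?thesis
    using d_mem(3) funpow_even_of_period2[OF z0_mem(3)] by simp
qed

lemma odd_periodic_point_reaching_d_eq_z0:
  assumes "(f ^^ p) y = y" "odd p" "(f ^^ j) y = d"
  shows "y = z0"
proof -
  have reach: "(f ^^ (2 + j)) y = z0"
    by (simp only: funpow_add_apply assms(3) d_mem(3))
  have "(f ^^ p) z0 = (f ^^ p) ((f ^^ (2 + j)) y)"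
    by (simp only: reach)
  also have "\<dots> = (f ^^ (2 + j)) ((f ^^ p) y)"
    by (rule funpow_swap)
  also have "\<dots> = z0"
    by (simp only: assms(1) reach)
  finally have "f z0 = z0"
    by (rule fixed_point_of_period2_odd_period[OF z0_mem(3) _ assms(2)])
  moreover have "0 < p"
    using assms(2) by presburger
  ultimately show ?thesis
    using periodic_point_eq_fixed_iterate[OF assms(1) _ reach] by blast
qed

lemma d_le_odd_iterate_right_of_mu':
  assumes n: "1 \<le> n" and y: "mu' n < y" "y \<le> u0" and q: "odd q" "q \<le> m + 2*n"
  shows "d \<le> (f ^^ q) y"
proof (rule ccontr)
  assume below: "\<not> d \<le> (f ^^ q) y"
  have "\<exists>r. m + 2*n = q + 2*r"
    using q odd_period by presburger
  then obtain r where r: "m + 2*n = q + 2*r"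
    by blast
  obtain t where t: "y \<le> t" "t \<le> u0" "(f ^^ (q + 2*r)) t = d"
    by (rule iterate_hits_d_of_sweep[of y u0 q r])
      (use below y mu'_mem[OF n] z0_le_odd_iterate_u0[OF q(1)] orbit_min_less_v
        u0_less_z0 z0_less_e in auto)
  then have "t \<le> mu' n"
    using le_mu'[of t n] r y mu'_mem[OF n] by simp
  then show False
    using t y by simp
qed

lemma d_le_odd_iterate_left_of_mu:
  assumes n: "1 \<le> n" and k: "1 \<le> k" and y: "mu' n \<le> y" "y < mu n k"
    and q: "odd q" "m + 2*n < q" "q \<le> m + 2*n + 2*k"
  shows "d \<le> (f ^^ q) y"
proof (rule ccontr)
  assume below: "\<not> d \<le> (f ^^ q) y"
  have "\<exists>i. q = m + 2*n + 2*i \<and> 1 \<le> i"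
    using q(1,2) odd_period by presburger
  then obtain i where i: "q = m + 2*n + 2*i" "1 \<le> i"
    by blast
  have "(f ^^ q) (mu' n) = (f ^^ (2*i)) ((f ^^ (m + 2*n)) (mu' n))"
    using i(1) by (metis add.commute funpow_add_apply)
  then have at_left: "(f ^^ q) (mu' n) = z0"
    using mu'_mem(3)[OF n] even_iterate_d[OF i(2)] by simp
  have y_u0: "y \<le> u0"
    using y mu_mem[OF n k] mu'_mem[of "n + 1"] by simp
  obtain t where t: "mu' n \<le> t" "t \<le> y" "(f ^^ (q + 2*(k - i))) t = d"
    by (rule iterate_hits_d_of_sweep[of "mu' n" y q "k - i"])
      (use below at_left y y_u0 mu'_mem[OF n] orbit_min_less_v u0_less_z0 z0_less_e in auto)
  have "q + 2*(k - i) = m + 2*n + 2*k"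
    using i q(3) by simp
  then have "mu n k \<le> t"
    using mu_le[of n t k] t y mu_mem[OF n k] by simp
  then show False
    using t y by simp
qed

theorem odd_period_ge:
  assumes n: "1 \<le> n" and k: "1 \<le> k" and y: "y \<in> {mu' n..mu n k}"
    and p: "least_period_point f p y" "odd p"
  shows "m + 2*n + 2*k \<le> p"
proof (rule ccontr)
  assume short: "\<not> m + 2*n + 2*k \<le> p"
  have periodic: "(f ^^ p) y = y"
    using p(1) by (simp add: least_period_point_def)
  have y_bounds: "v \<le> y" "y \<le> u0"
    using y mu'_mem[OF n] mu_mem[OF n k] mu'_mem[of "n + 1"] by auto
  consider "y = mu' n \<or> y = mu n k" | "mu' n < y" "y < mu n k"
    using y by force
  then show False
  proof cases
    case 1
    then obtain j where "(f ^^ j) y = d"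
      using mu'_mem[OF n] mu_mem[OF n k] by blast
    then have "y = z0"
      using odd_periodic_point_reaching_d_eq_z0 periodic p(2) by blast
    then show False
      using y_bounds u0_less_z0 by simp
  next
    case 2
    have "(f ^^ (p + 2)) y = (f ^^ 2) y"
      using funpow_add_apply[of 2 p f y] periodic by (simp add: add.commute)
    also have "\<dots> < d"
      using iter2_less_d_left_of_u0 y_bounds 2 mu_mem[OF n k] mu'_mem[of "n + 1"] by simp
    finally have "(f ^^ (p + 2)) y < d" .
    moreover have "d \<le> (f ^^ (p + 2)) y"
    proof (cases "p + 2 \<le> m + 2*n")
      case True
      then show ?thesis
        by (rule d_le_odd_iterate_right_of_mu'[OF n 2(1) y_bounds(2), rotated]) (use p(2) in simp)
    next
      case False
      moreover have "p + 2 \<le> m + 2*n + 2*k"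
        using short p(2) odd_period by presburger
      ultimately show ?thesis
        by (intro d_le_odd_iterate_left_of_mu[OF n k _ 2(2)]) (use 2(1) p(2) in simp_all)
    qed
    ultimately show False
      by simp
  qed
qed

end

theorem lemma14:
  fixes f :: "real \<Rightarrow> real" and a b :: real and m :: nat and P :: "real set"
    and v z :: real
  assumes ab: "a \<le> b"
    and cont: "continuous_on {a..b} f"
    and maps: "f ` {a..b} \<subseteq> {a..b}"
    and m: "m \<ge> 3" "odd m"
    and orbit: "\<exists>x0\<in>{a..b}. least_period_point f m x0 \<and> P = {(f ^^ i) x0 | i. i < m}"
    and e_def: "e = (f ^^ (m - 1)) (Min P)"
    and v: "v \<in> {Min P..<e}" "f v = e"
    and z: "z \<in> {v<..<e}" "f z = z"
    and z0_def: "z0 = Inf {x \<in> {v..z}. (f ^^ 2) x = x}"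
    and d_def: "d = Sup {x \<in> {Min P..v}. (f ^^ 2) x = z0}"
    and u0_def: "u0 = Inf {x \<in> {v..z0}. (f ^^ 2) x = d}"
    and mu'_def: "\<And>n. mu' n = Sup {x \<in> {v..u0}. (f ^^ (m + 2*n)) x = d}"
    and mu_def: "\<And>n k. mu n k = Inf {x \<in> {mu' n..mu' (n+1)}. (f ^^ (m + 2*n + 2*k)) x = d}"
  shows "\<forall>n k y p. n \<ge> 1 \<and> k \<ge> 1 \<and> y \<in> {mu' n..mu n k} \<and> least_period_point f p y \<and> odd p
           \<longrightarrow> p \<ge> m + 2*n + 2*k"
proof -
  obtain x0 where x0: "x0 \<in> {a..b}" "least_period_point f m x0"
    and P: "P = {(f ^^ i) x0 | i. i < m}"
    using orbit by blast
  interpret O: odd_periodic_orbit a b f m x0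
    using cont maps m x0 by unfold_locales auto
  have min: "Min P = O.orbit_min"
    unfolding P O.orbit_min_def O.orbit_def ..
  have e: "e = O.e"
    unfolding e_def min O.e_def ..
  interpret C: odd_orbit_setting a b f m x0 v z
    using v z by unfold_locales (simp_all flip: min e)
  have z0: "z0 = C.z0"
    unfolding z0_def C.z0_def ..
  have d: "d = C.d"
    unfolding d_def C.d_def min z0 ..
  have u0: "u0 = C.u0"
    unfolding u0_def C.u0_def z0 d ..
  have mu': "mu' = C.mu'"
    by (rule ext) (simp only: mu'_def C.mu'_def u0 d)
  have mu: "mu = C.mu"
    by (intro ext) (simp only: mu_def C.mu_def mu' d)
  show ?thesis
    unfolding mu' mu using C.odd_period_ge by auto
qed

end
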